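(* In the two-type setting described in the context: (1) if $x_1>1$ and $x_2>1$, then diffusion occurs from a small seed for every $\pi\in(0,1)$; (2) if $x_1\le1$ and $x_2\le1$, then diffusion does not occur from a small seed for any $\pi\in(0,1)$; (3) if exactly one of $x_1,x_2$ exceeds $1$, then there exists $\pi^*\in(0,1)$ such that diffusion occurs from a small seed for every $\pi\in(\pi^*,1)$.
   Context: There are two types $i\in\{1,2\}$, with meeting matrix $\Pi=\begin{pmatrix}\pi&1-\pi\\1-\pi&\pi\end{pmatrix}$, $0<\pi<1$. For each type $i$: $P_i$ is a degree distribution on the nonnegative integers; $w_i(d)>0$ are degree weights; $f_i(d,a)$, $g_i(d,a)$ ($0\le a\le d$) are adoption and abandonment rates satisfying: $f_i(d,0)=0$; $f_i(d,a)$ nondecreasing in $a$; $f_i(d,1)>0$ for some $d$ with $P_i(d)>0$; $g_i(d,0)>0$; $g_i(d,a)$ nonincreasing in $a$. Let $x_i=\sum_dP_i(d)w_i(d)\,d\,\frac{f_i(d,1)}{g_i(d,0)}$ (assumed finite; it is positive) and $A=\begin{pmatrix}\pi x_1&(1-\pi)x_2\\(1-\pi)x_1&\pi x_2\end{pmatrix}$. Diffusion occurs from a small seed means: for every $\varepsilon>0$ there exists $v\in\mathbb{R}^2$ with $0<v_i<\varepsilon$ and $(Av)_i>v_i$ for $i=1,2$. Diffusion within type $i$ when isolated corresponds to $x_i>1$. *)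

theory Defs
  imports Complex_Main
begin

text \<open>Types are indexed by 1 and 2 (natural numbers). For type i:
  P i d  = degree distribution, w i d = degree weight,
  f i d a, g i d a = adoption / abandonment rates (meaningful for a \<le> d).\<close>

definition x_val :: "(nat \<Rightarrow> nat \<Rightarrow> real) \<Rightarrow> (nat \<Rightarrow> nat \<Rightarrow> real)
    \<Rightarrow> (nat \<Rightarrow> nat \<Rightarrow> nat \<Rightarrow> real) \<Rightarrow> (nat \<Rightarrow> nat \<Rightarrow> nat \<Rightarrow> real) \<Rightarrow> nat \<Rightarrow> real" where
  "x_val P w f g i = (\<Sum>d. P i d * w i d * real d * (f i d 1 / g i d 0))"

definition type_data_ok :: "(nat \<Rightarrow> nat \<Rightarrow> real) \<Rightarrow> (nat \<Rightarrow> nat \<Rightarrow> real)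
    \<Rightarrow> (nat \<Rightarrow> nat \<Rightarrow> nat \<Rightarrow> real) \<Rightarrow> (nat \<Rightarrow> nat \<Rightarrow> nat \<Rightarrow> real) \<Rightarrow> nat \<Rightarrow> bool" where
  "type_data_ok P w f g i \<longleftrightarrow>
     (\<forall>d. P i d \<ge> 0) \<and> summable (P i) \<and> (\<Sum>d. P i d) = 1 \<and>
     (\<forall>d. w i d > 0) \<and>
     (\<forall>d. f i d 0 = 0) \<and>
     (\<forall>d a b. a \<le> b \<and> b \<le> d \<longrightarrow> f i d a \<le> f i d b) \<and>
     (\<exists>d. 1 \<le> d \<and> P i d > 0 \<and> f i d 1 > 0) \<and>
     (\<forall>d. g i d 0 > 0) \<and>
     (\<forall>d a b. a \<le> b \<and> b \<le> d \<longrightarrow> g i d b \<le> g i d a) \<and>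
     summable (\<lambda>d. P i d * w i d * real d * (f i d 1 / g i d 0))"

definition A_mat :: "real \<Rightarrow> real \<Rightarrow> real \<Rightarrow> nat \<Rightarrow> nat \<Rightarrow> real" where
  "A_mat p x1 x2 i j =
     (if i = 1 \<and> j = 1 then p * x1 else if i = 1 \<and> j = 2 then (1 - p) * x2
      else if i = 2 \<and> j = 1 then (1 - p) * x1 else p * x2)"

definition diffusion_small_seed :: "real \<Rightarrow> real \<Rightarrow> real \<Rightarrow> bool" where
  "diffusion_small_seed p x1 x2 \<longleftrightarrow>
     (\<forall>\<epsilon>>0. \<exists>v :: nat \<Rightarrow> real. \<forall>i\<in>{1,2}.
        0 < v i \<and> v i < \<epsilon> \<and> (\<Sum>j\<in>{1,2}. A_mat p x1 x2 i j * v j) > v i)"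

end

theory Submission
  imports Defs
begin

text \<open>The columns of A sum to x1 and x2. If x1, x2 > 1, both rows of A are convex
  combinations of numbers above 1, so a constant seed grows. If x1, x2 \<le> 1, adding the two
  growth inequalities gives x1 v1 + x2 v2 > v1 + v2, impossible. If only x1 > 1, then for
  \<pi> > 1/x1 type 1 grows on its own, and a seed whose type-2 part is half of what type 1
  sends to type 2 grows in both coordinates; this needs only x2 \<ge> 0.\<close>

lemma x_val_nonneg:
  assumes "type_data_ok P w f g i"
  shows "x_val P w f g i \<ge> 0"
  unfolding x_val_def
proof (rule suminf_nonneg)
  show "summable (\<lambda>d. P i d * w i d * real d * (f i d 1 / g i d 0))"
    using assms unfolding type_data_ok_def by blast
next
  fix d
  show "0 \<le> P i d * w i d * real d * (f i d 1 / g i d 0)"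
  proof (cases "d = 0")
    case False
    have "\<forall>d a b. a \<le> b \<and> b \<le> d \<longrightarrow> f i d a \<le> f i d b"
      using assms unfolding type_data_ok_def by blast
    with False have "f i d 0 \<le> f i d 1" by simp
    with assms have "f i d 1 \<ge> 0" and "g i d 0 > 0" and "P i d \<ge> 0" and "w i d > 0"
      unfolding type_data_ok_def by auto
    then show ?thesis by simp
  qed simp
qed

lemma diffusion_small_seed_iff:
  "diffusion_small_seed p x1 x2 \<longleftrightarrow>
     (\<forall>e>0. \<exists>v1 v2. 0 < v1 \<and> v1 < e \<and> 0 < v2 \<and> v2 < e \<and>
        p * x1 * v1 + (1 - p) * x2 * v2 > v1 \<and> (1 - p) * x1 * v1 + p * x2 * v2 > v2)"
  (is "_ \<longleftrightarrow> (\<forall>e>0. \<exists>v1 v2. ?grows e v1 v2)")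
proof -
  have "(\<exists>v :: nat \<Rightarrow> real. \<forall>i\<in>{1,2}. 0 < v i \<and> v i < e \<and>
            (\<Sum>j\<in>{1,2}. A_mat p x1 x2 i j * v j) > v i) \<longleftrightarrow> (\<exists>v1 v2. ?grows e v1 v2)" for e
  proof
    assume "\<exists>v :: nat \<Rightarrow> real. \<forall>i\<in>{1,2}. 0 < v i \<and> v i < e \<and>
              (\<Sum>j\<in>{1,2}. A_mat p x1 x2 i j * v j) > v i"
    then obtain v :: "nat \<Rightarrow> real" where "\<forall>i\<in>{1,2}. 0 < v i \<and> v i < e \<and>
              (\<Sum>j\<in>{1,2}. A_mat p x1 x2 i j * v j) > v i" (is "\<forall>i\<in>{1,2}. ?ok i")
      by blast
    then have "?ok 1" "?ok 2" by simp_all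
    then show "\<exists>v1 v2. ?grows e v1 v2"
      by (auto simp: A_mat_def)
  next
    assume "\<exists>v1 v2. ?grows e v1 v2"
    then obtain v1 v2 where "?grows e v1 v2" by blast
    then show "\<exists>v :: nat \<Rightarrow> real. \<forall>i\<in>{1,2}. 0 < v i \<and> v i < e \<and>
              (\<Sum>j\<in>{1,2}. A_mat p x1 x2 i j * v j) > v i"
      by (intro exI[of _ "\<lambda>i. if i = 1 then v1 else v2"]) (auto simp: A_mat_def)
  qed
  then show ?thesis
    unfolding diffusion_small_seed_def by presburger
qed

lemma diffusion_small_seed_swap:
  assumes "diffusion_small_seed p x1 x2"
  shows "diffusion_small_seed p x2 x1"
  unfolding diffusion_small_seed_iff
proof (intro allI impI)
  fix e :: real
  assume "e > 0"
  with assms obtain v1 v2 where v: "0 < v1" "v1 < e" "0 < v2" "v2 < e"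
    and "p * x1 * v1 + (1 - p) * x2 * v2 > v1" "(1 - p) * x1 * v1 + p * x2 * v2 > v2"
    unfolding diffusion_small_seed_iff by blast
  then have "p * x2 * v2 + (1 - p) * x1 * v1 > v2" "(1 - p) * x2 * v2 + p * x1 * v1 > v1"
    by linarith+
  with v show "\<exists>v1 v2. 0 < v1 \<and> v1 < e \<and> 0 < v2 \<and> v2 < e \<and>
      p * x2 * v1 + (1 - p) * x1 * v2 > v1 \<and> (1 - p) * x2 * v1 + p * x1 * v2 > v2"
    by blast
qed

lemma diffusion_small_seed_if_both_gt_one:
  assumes "x1 > 1" "x2 > 1" "0 < p" "p < 1"
  shows "diffusion_small_seed p x1 x2"
  unfolding diffusion_small_seed_iff
proof (intro allI impI)
  fix e :: real
  assume "e > 0"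
  have "p * (x1 - 1) > 0" "(1 - p) * (x2 - 1) > 0" "(1 - p) * (x1 - 1) > 0" "p * (x2 - 1) > 0"
    using assms by simp_all
  then have "p * x1 + (1 - p) * x2 > 1" and "(1 - p) * x1 + p * x2 > 1"
    by (simp_all add: algebra_simps)
  with \<open>e > 0\<close> have "p * x1 * (e/2) + (1 - p) * x2 * (e/2) > e/2"
    and "(1 - p) * x1 * (e/2) + p * x2 * (e/2) > e/2"
    by (simp_all flip: distrib_right)
  with \<open>e > 0\<close> show "\<exists>v1 v2. 0 < v1 \<and> v1 < e \<and> 0 < v2 \<and> v2 < e \<and>
      p * x1 * v1 + (1 - p) * x2 * v2 > v1 \<and> (1 - p) * x1 * v1 + p * x2 * v2 > v2"
    by (intro exI[of _ "e/2"]) simp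
qed

lemma not_diffusion_small_seed_if_both_le_one:
  assumes "x1 \<le> 1" "x2 \<le> 1"
  shows "\<not> diffusion_small_seed p x1 x2"
proof
  assume "diffusion_small_seed p x1 x2"
  then obtain v1 v2 where v: "0 < v1" "0 < v2"
    "p * x1 * v1 + (1 - p) * x2 * v2 > v1" "(1 - p) * x1 * v1 + p * x2 * v2 > v2"
    unfolding diffusion_small_seed_iff by (meson zero_less_one)
  then have "x1 * v1 + x2 * v2 > v1 + v2"
    by (simp add: algebra_simps)
  moreover have "x1 * v1 \<le> v1" "x2 * v2 \<le> v2"
    using assms v by (simp_all add: mult_left_le_one_le)
  ultimately show False by linarith
qed

lemma diffusion_small_seed_if_self_growth:
  assumes "p * x1 > 1" "0 < p" "p < 1" "x2 \<ge> 0"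
  shows "diffusion_small_seed p x1 x2"
  unfolding diffusion_small_seed_iff
proof (intro allI impI)
  fix e :: real
  assume "e > 0"
  have "x1 > 0"
  proof (rule ccontr)
    assume "\<not> x1 > 0"
    with \<open>0 < p\<close> have "p * x1 \<le> 0"
      by (simp add: mult_nonneg_nonpos)
    with \<open>p * x1 > 1\<close> show False by linarith
  qed
  define v1 where "v1 = e / (1 + x1)"
  define v2 where "v2 = (1 - p) * x1 * v1 / 2"
  have "0 < v1" "v1 < e" "x1 * v1 < e"
    using \<open>e > 0\<close> \<open>x1 > 0\<close> by (simp_all add: v1_def field_simps)
  have "0 < v2"
    using assms \<open>x1 > 0\<close> \<open>0 < v1\<close> by (simp add: v2_def)
  have "v2 < x1 * v1"
    using assms \<open>x1 > 0\<close> \<open>0 < v1\<close> by (simp add: v2_def)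
  have "p * x1 * v1 > v1"
    using assms \<open>0 < v1\<close> by simp
  moreover have "(1 - p) * x2 * v2 \<ge> 0" and "p * x2 * v2 \<ge> 0"
    using assms \<open>0 < v2\<close> by simp_all
  moreover have "(1 - p) * x1 * v1 = 2 * v2"
    by (simp add: v2_def)
  ultimately have "p * x1 * v1 + (1 - p) * x2 * v2 > v1" "(1 - p) * x1 * v1 + p * x2 * v2 > v2"
    using \<open>0 < v2\<close> by linarith+
  moreover have "v2 < e"
    using \<open>v2 < x1 * v1\<close> \<open>x1 * v1 < e\<close> by linarith
  ultimately show "\<exists>v1 v2. 0 < v1 \<and> v1 < e \<and> 0 < v2 \<and> v2 < e \<and>
      p * x1 * v1 + (1 - p) * x2 * v2 > v1 \<and> (1 - p) * x1 * v1 + p * x2 * v2 > v2"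
    using \<open>0 < v1\<close> \<open>v1 < e\<close> \<open>0 < v2\<close> by blast
qed

lemma diffusion_small_seed_near_homophily:
  assumes "x1 > 1" "x2 \<ge> 0"
  shows "\<exists>pstar\<in>{0<..<1::real}. \<forall>p\<in>{pstar<..<1}. diffusion_small_seed p x1 x2"
proof
  show "1 / x1 \<in> {0<..<1::real}"
    using assms by simp
  show "\<forall>p\<in>{1/x1<..<1}. diffusion_small_seed p x1 x2"
  proof
    fix p
    assume "p \<in> {1/x1<..<1}"
    then have "1 / x1 < p" "p < 1" by simp_all
    moreover have "0 < 1 / x1"
      using assms by simp
    ultimately have "0 < p" by linarith
    have "p * x1 > 1"
      using \<open>1 / x1 < p\<close> assms by (simp add: field_simps)
    with \<open>0 < p\<close> \<open>p < 1\<close> assms show "diffusion_small_seed p x1 x2"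
      by (intro diffusion_small_seed_if_self_growth)
  qed
qed

theorem corollary2:
  fixes P w :: "nat \<Rightarrow> nat \<Rightarrow> real"
    and f g :: "nat \<Rightarrow> nat \<Rightarrow> nat \<Rightarrow> real"
  assumes "type_data_ok P w f g 1" and "type_data_ok P w f g 2"
  defines "x1 \<equiv> x_val P w f g 1" and "x2 \<equiv> x_val P w f g 2"
  shows "(x1 > 1 \<and> x2 > 1 \<longrightarrow> (\<forall>p\<in>{0<..<1}. diffusion_small_seed p x1 x2))
       \<and> (x1 \<le> 1 \<and> x2 \<le> 1 \<longrightarrow> (\<forall>p\<in>{0<..<1}. \<not> diffusion_small_seed p x1 x2))
       \<and> ((x1 > 1) \<noteq> (x2 > 1) \<longrightarrow>
            (\<exists>pstar\<in>{0<..<1::real}. \<forall>p\<in>{pstar<..<1}. diffusion_small_seed p x1 x2))"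
proof (intro conjI impI)
  have "x1 \<ge> 0" "x2 \<ge> 0"
    using x_val_nonneg assms by auto
  show "\<forall>p\<in>{0<..<1}. diffusion_small_seed p x1 x2" if "x1 > 1 \<and> x2 > 1"
    using that diffusion_small_seed_if_both_gt_one by auto
  show "\<forall>p\<in>{0<..<1}. \<not> diffusion_small_seed p x1 x2" if "x1 \<le> 1 \<and> x2 \<le> 1"
    using that not_diffusion_small_seed_if_both_le_one by auto
  show "\<exists>pstar\<in>{0<..<1::real}. \<forall>p\<in>{pstar<..<1}. diffusion_small_seed p x1 x2"
    if "(x1 > 1) \<noteq> (x2 > 1)"
  proof (cases "x1 > 1")
    case True
    then show ?thesis
      using diffusion_small_seed_near_homophily \<open>x2 \<ge> 0\<close> by blast
  next
    case False
    with that have "x2 > 1" by simp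
    then show ?thesis
      using diffusion_small_seed_near_homophily[of x2 x1] \<open>x1 \<ge> 0\<close>
        diffusion_small_seed_swap by blast
  qed
qed

end
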